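(* Let $G$ be a finite abelian group, let $I,\Lambda$ be non-empty sets, and let $P=(p_{\lambda i})$ be a $\Lambda\times I$ matrix with entries in $G\cup\{\mathbf{0}\}$. Let $A$ be a finite alphabet and let $L\subseteq A^{+}$ be a language recognised by the Rees zero-matrix semigroup $M^{0}[G;I,\Lambda;P]$. Then $L$ has generalised star-height at most $1$. The same conclusion holds for languages recognised by the Rees matrix semigroup $M[G;I,\Lambda;P]$ (where all entries of $P$ lie in $G$).
   Context: For a semigroup $S$ without zero, non-empty sets $I,\Lambda$ and a $\Lambda\times I$ matrix $P=(p_{\lambda i})$ with entries in $S\cup\{\mathbf{0}\}$ ($\mathbf{0}$ a new symbol), the Rees zero-matrix semigroup $M^{0}[S;I,\Lambda;P]$ is the set $(I\times S\times\Lambda)\cup\{\mathbf{0}\}$ with multiplication $(i,s,\lambda)(j,t,\mu)=(i,s\,p_{\lambda j}\,t,\mu)$ if $p_{\lambda j}\neq\mathbf{0}$, $(i,s,\lambda)(j,t,\mu)=\mathbf{0}$ if $p_{\lambda j}=\mathbf{0}$, and $x\mathbf{0}=\mathbf{0}x=\mathbf{0}$ for all $x$. If all entries of $P$ lie in $S$, then $I\times S\times\Lambda$ with the same multiplication is the Rees matrix semigroup $M[S;I,\Lambda;P]$. A language $L\subseteq A^{+}$ is recognised by a semigroup $T$ if there is a semigroup morphism $\psi:A^{+}\to T$ and a subset $X\subseteq T$ with $L=X\psi^{-1}$. Generalised regular expressions over $A$: $\emptyset$, $\varepsilon$ and each letter $a\in A$ are expressions; if $E,F$ are expressions then so are $E\cup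 F$, $EF$, $E^{\ast}$ and $E^{c}$ (complement in $A^{\ast}$). The star-height $h$ of an expression: $h(\emptyset)=h(\varepsilon)=h(a)=0$, $h(E\cup F)=h(EF)=\max\{h(E),h(F)\}$, $h(E^{\ast})=h(E)+1$, $h(E^{c})=h(E)$. The (generalised) star-height of a language is the minimum of $h(E)$ over all expressions $E$ representing it. *)

theory Defs
  imports "HOL-Algebra.Group"
begin

definition conc :: "'a list set \<Rightarrow> 'a list set \<Rightarrow> 'a list set" where
  "conc K L = {u @ v | u v. u \<in> K \<and> v \<in> L}"

definition kstar :: "'a list set \<Rightarrow> 'a list set" where
  "kstar L = (\<Union>n. ((conc L) ^^ n) {[]})"

datatype 'a gre =
    Empty
  | Eps
  | Letter 'a
  | Union "'a gre" "'a gre"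
  | Concat "'a gre" "'a gre"
  | Star "'a gre"
  | Compl "'a gre"

fun letters :: "'a gre \<Rightarrow> 'a set" where
  "letters Empty = {}"
| "letters Eps = {}"
| "letters (Letter a) = {a}"
| "letters (Union E F) = letters E \<union> letters F"
| "letters (Concat E F) = letters E \<union> letters F"
| "letters (Star E) = letters E"
| "letters (Compl E) = letters E"

fun lang :: "'a set \<Rightarrow> 'a gre \<Rightarrow> 'a list set" where
  "lang A Empty = {}"
| "lang A Eps = {[]}"
| "lang A (Letter a) = {[a]}"
| "lang A (Union E F) = lang A E \<union> lang A F"
| "lang A (Concat E F) = conc (lang A E) (lang A F)"
| "lang A (Star E) = kstar (lang A E)"
| "lang A (Compl E) = lists A - lang A E"

fun star_height :: "'a gre \<Rightarrow> nat" where
  "star_height Empty = 0"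
| "star_height Eps = 0"
| "star_height (Letter a) = 0"
| "star_height (Union E F) = max (star_height E) (star_height F)"
| "star_height (Concat E F) = max (star_height E) (star_height F)"
| "star_height (Star E) = star_height E + 1"
| "star_height (Compl E) = star_height E"

definition gen_star_height_le :: "'a set \<Rightarrow> 'a list set \<Rightarrow> nat \<Rightarrow> bool" where
  "gen_star_height_le A L h \<longleftrightarrow>
     (\<exists>E. letters E \<subseteq> A \<and> lang A E = L \<and> star_height E \<le> h)"

definition recognises ::
  "'t set \<Rightarrow> ('t \<Rightarrow> 't \<Rightarrow> 't) \<Rightarrow> 'a set \<Rightarrow> 'a list set \<Rightarrow> bool" where
  "recognises T mul A L \<longleftrightarrow>
     (\<exists>psi X.
        (\<forall>w. w \<in> lists A \<and> w \<noteq> [] \<longrightarrow> psi w \<in> T) \<and>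
        (\<forall>u v. u \<in> lists A \<and> u \<noteq> [] \<and> v \<in> lists A \<and> v \<noteq> [] \<longrightarrow>
               psi (u @ v) = mul (psi u) (psi v)) \<and>
        X \<subseteq> T \<and>
        L = {w \<in> lists A. w \<noteq> [] \<and> psi w \<in> X})"

text \<open>Rees zero-matrix semigroup M0[G;I,Lambda;P]: None is the zero;
  P l i = None means the matrix entry is the zero symbol.\<close>
definition rees0_carrier ::
  "('g, 'b) monoid_scheme \<Rightarrow> 'i set \<Rightarrow> 'l set \<Rightarrow> ('i \<times> 'g \<times> 'l) option set" where
  "rees0_carrier G I Lam = insert None (Some ` (I \<times> carrier G \<times> Lam))"

definition rees0_mult ::
  "('g, 'b) monoid_scheme \<Rightarrow> ('l \<Rightarrow> 'i \<Rightarrow> 'g option) \<Rightarrow>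
   ('i \<times> 'g \<times> 'l) option \<Rightarrow> ('i \<times> 'g \<times> 'l) option \<Rightarrow> ('i \<times> 'g \<times> 'l) option" where
  "rees0_mult G P x y =
     (case x of None \<Rightarrow> None
      | Some (i, s, l) \<Rightarrow>
        (case y of None \<Rightarrow> None
         | Some (j, t, m) \<Rightarrow>
           (case P l j of None \<Rightarrow> None
            | Some p \<Rightarrow> Some (i, s \<otimes>\<^bsub>G\<^esub> p \<otimes>\<^bsub>G\<^esub> t, m))))"

definition rees_carrier ::
  "('g, 'b) monoid_scheme \<Rightarrow> 'i set \<Rightarrow> 'l set \<Rightarrow> ('i \<times> 'g \<times> 'l) set" where
  "rees_carrier G I Lam = I \<times> carrier G \<times> Lam"

definition rees_mult ::
  "('g, 'b) monoid_scheme \<Rightarrow> ('l \<Rightarrow> 'i \<Rightarrow> 'g) \<Rightarrow>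
   ('i \<times> 'g \<times> 'l) \<Rightarrow> ('i \<times> 'g \<times> 'l) \<Rightarrow> ('i \<times> 'g \<times> 'l)" where
  "rees_mult G P x y =
     (case x of (i, s, l) \<Rightarrow> (case y of (j, t, m) \<Rightarrow> (i, s \<otimes>\<^bsub>G\<^esub> P l j \<otimes>\<^bsub>G\<^esub> t, m)))"

end

theory Submission
  imports Defs "HOL-Algebra.Multiplicative_Group"
begin

text \<open>
  Multiplying out the Rees products, the image of a word \<open>a\<^sub>1\<cdots>a\<^sub>n\<close> under a morphism
  \<open>\<psi>\<close> into \<open>M\<^sup>0[G; I, \<Lambda>; P]\<close> is zero exactly when some letter is sent to zero or some
  adjacent pair \<open>a\<^sub>k a\<^sub>k\<^sub>+\<^sub>1\<close> meets a zero entry of \<open>P\<close>. Otherwise its row is that of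
  \<open>a\<^sub>1\<close>, its column that of \<open>a\<^sub>n\<close>, and, \<open>G\<close> being commutative, its group component is
  the component of \<open>\<psi>(a\<^sub>1)\<close> times, for every pair \<open>(a, b)\<close> of letters, a fixed group
  element raised to the number of occurrences of the factor \<open>ab\<close>. Hence \<open>\<psi>(w)\<close> only
  depends on the signature of \<open>w\<close>: its first and last letters, which two-letter factors
  occur, and how often each occurs modulo \<open>|G|\<close>. A recognised language is a finite union
  of signature classes, and each class has star-height at most 1: counting the factor
  \<open>cd\<close> modulo \<open>|G|\<close> needs a single star, since cutting a word between the \<open>c\<close> and
  the \<open>d\<close> of each occurrence of \<open>cd\<close> leaves star-free pieces.
  The Rees matrix semigroup embeds into the Rees zero-matrix semigroup with the same matrix.
\<close>

section \<open>Languages of star height at most \<open>h\<close>\<close>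

lemma lang_subset_lists: "letters E \<subseteq> A \<Longrightarrow> lang A E \<subseteq> lists A"
proof (induction E)
  case (Concat E F)
  then show ?case by (auto simp: conc_def dest!: subsetD)
next
  case (Star E)
  have "((conc (lang A E)) ^^ n) {[]} \<subseteq> lists A" for n
    using Star by (induction n) (auto simp: conc_def dest!: subsetD)
  then show ?case by (auto simp: kstar_def)
qed auto

lemma gen_star_height_le_subset_lists: "gen_star_height_le A L h \<Longrightarrow> L \<subseteq> lists A"
  unfolding gen_star_height_le_def using lang_subset_lists by blast

lemma gen_star_height_le_empty: "gen_star_height_le A {} h"
  unfolding gen_star_height_le_def by (rule exI[of _ Empty]) auto

lemma gen_star_height_le_Nil: "gen_star_height_le A {[]} h"
  unfolding gen_star_height_le_def by (rule exI[of _ Eps]) auto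

lemma gen_star_height_le_letter: "a \<in> A \<Longrightarrow> gen_star_height_le A {[a]} h"
  unfolding gen_star_height_le_def by (rule exI[of _ "Letter a"]) auto

lemma gen_star_height_le_Un:
  "gen_star_height_le A K h \<Longrightarrow> gen_star_height_le A L h \<Longrightarrow> gen_star_height_le A (K \<union> L) h"
  unfolding gen_star_height_le_def
  by (metis lang.simps(4) letters.simps(4) max.bounded_iff sup.bounded_iff star_height.simps(4))

lemma gen_star_height_le_conc:
  "gen_star_height_le A K h \<Longrightarrow> gen_star_height_le A L h \<Longrightarrow> gen_star_height_le A (conc K L) h"
  unfolding gen_star_height_le_def
  by (metis lang.simps(5) letters.simps(5) max.bounded_iff sup.bounded_iff star_height.simps(5))

lemma gen_star_height_le_Diff_lists:
  "gen_star_height_le A L h \<Longrightarrow> gen_star_height_le A (lists A - L) h"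
  unfolding gen_star_height_le_def by (metis lang.simps(7) letters.simps(7) star_height.simps(7))

lemma gen_star_height_le_kstar:
  "gen_star_height_le A L h \<Longrightarrow> gen_star_height_le A (kstar L) (h + 1)"
  unfolding gen_star_height_le_def
  by (metis add_le_mono1 lang.simps(6) letters.simps(6) star_height.simps(6))

lemma gen_star_height_le_lists: "gen_star_height_le A (lists A) h"
  using gen_star_height_le_Diff_lists[OF gen_star_height_le_empty] by simp

lemma gen_star_height_le_Int:
  assumes "gen_star_height_le A K h" "gen_star_height_le A L h"
  shows "gen_star_height_le A (K \<inter> L) h"
proof -
  have "K \<inter> L = lists A - ((lists A - K) \<union> (lists A - L))"
    using assms[THEN gen_star_height_le_subset_lists] by blast
  then show ?thesis
    using assms by (simp add: gen_star_height_le_Diff_lists gen_star_height_le_Un)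
qed

lemma gen_star_height_le_UN:
  "finite S \<Longrightarrow> (\<And>s. s \<in> S \<Longrightarrow> gen_star_height_le A (F s) h) \<Longrightarrow> gen_star_height_le A (\<Union>s\<in>S. F s) h"
  by (induction S rule: finite_induct) (auto intro: gen_star_height_le_empty gen_star_height_le_Un)

lemma gen_star_height_le_INT_lists:
  "finite S \<Longrightarrow> (\<And>s. s \<in> S \<Longrightarrow> gen_star_height_le A (F s) h) \<Longrightarrow>
   gen_star_height_le A (lists A \<inter> (\<Inter>s\<in>S. F s)) h"
proof (induction S rule: finite_induct)
  case (insert s S)
  have "lists A \<inter> (\<Inter>t\<in>insert s S. F t) = F s \<inter> (lists A \<inter> (\<Inter>t\<in>S. F t))" by auto
  with insert show ?case by (simp add: gen_star_height_le_Int)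
qed (simp add: gen_star_height_le_lists)

lemma gen_star_height_le_saturated:
  assumes "finite (f ` {w \<in> lists A. w \<noteq> []})"
    and "\<And>w. w \<in> lists A \<Longrightarrow> w \<noteq> [] \<Longrightarrow> gen_star_height_le A {v \<in> lists A. v \<noteq> [] \<and> f v = f w} h"
    and "L \<subseteq> {w \<in> lists A. w \<noteq> []}"
    and "\<And>u v. u \<in> L \<Longrightarrow> v \<in> lists A \<Longrightarrow> v \<noteq> [] \<Longrightarrow> f v = f u \<Longrightarrow> v \<in> L"
  shows "gen_star_height_le A L h"
proof -
  have L_eq: "L = (\<Union>x\<in>f ` L. {v \<in> lists A. v \<noteq> [] \<and> f v = x})"
    using assms(3,4) by blast
  have "finite (f ` L)"
    using assms(3,1) by (rule finite_subset[OF image_mono])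
  moreover have "gen_star_height_le A {v \<in> lists A. v \<noteq> [] \<and> f v = x} h" if x: "x \<in> f ` L" for x
  proof -
    obtain u where "u \<in> L" "x = f u"
      using x by blast
    then show ?thesis
      using assms(2)[of u] assms(3) by auto
  qed
  ultimately show ?thesis
    by (subst L_eq) (rule gen_star_height_le_UN)
qed

lemma conc_assoc: "conc (conc K L) M = conc K (conc L M)"
  unfolding conc_def by (auto, metis append_assoc, metis append_assoc)

lemma conc_Nil_left [simp]: "conc {[]} L = L"
  unfolding conc_def by auto

lemma conc_UN_left: "conc (\<Union>i\<in>S. K i) L = (\<Union>i\<in>S. conc (K i) L)"
  unfolding conc_def by blast

lemma conc_UN_right: "conc K (\<Union>i\<in>S. L i) = (\<Union>i\<in>S. conc K (L i))"
  unfolding conc_def by blast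

definition conc_pow :: "'a list set \<Rightarrow> nat \<Rightarrow> 'a list set" where
  "conc_pow L n = (conc L ^^ n) {[]}"

lemma conc_pow_0 [simp]: "conc_pow L 0 = {[]}"
  by (simp add: conc_pow_def)

lemma conc_pow_Suc: "conc_pow L (Suc n) = conc L (conc_pow L n)"
  by (simp add: conc_pow_def)

lemma conc_pow_add: "conc_pow L (m + n) = conc (conc_pow L m) (conc_pow L n)"
  by (induction m) (simp_all add: conc_pow_Suc conc_assoc)

lemma conc_pow_mult: "conc_pow (conc_pow L m) n = conc_pow L (m * n)"
  by (induction n) (simp_all add: conc_pow_Suc conc_pow_add[symmetric])

lemma kstar_eq_UN_conc_pow: "kstar L = (\<Union>n. conc_pow L n)"
  by (simp add: kstar_def conc_pow_def)

lemma gen_star_height_le_conc_pow: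
  "gen_star_height_le A L h \<Longrightarrow> gen_star_height_le A (conc_pow L n) h"
  by (induction n) (simp_all add: conc_pow_Suc gen_star_height_le_Nil gen_star_height_le_conc)

lemma gen_star_height_le_hd_in:
  assumes "finite A"
  shows "gen_star_height_le A {w \<in> lists A. w \<noteq> [] \<and> hd w \<in> D} h"
proof -
  have "{w \<in> lists A. w \<noteq> [] \<and> hd w \<in> D} = (\<Union>a\<in>A \<inter> D. conc {[a]} (lists A))"
    by (auto simp: conc_def neq_Nil_conv)
  then show ?thesis
    using assms
    by (auto intro!: gen_star_height_le_UN gen_star_height_le_conc gen_star_height_le_letter
        gen_star_height_le_lists)
qed

lemma gen_star_height_le_last_eq: "gen_star_height_le A {w \<in> lists A. w \<noteq> [] \<and> last w = c} h"
proof -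
  have "w \<in> lists A \<and> w \<noteq> [] \<and> last w = c \<longleftrightarrow> c \<in> A \<and> (\<exists>u \<in> lists A. w = u @ [c])" for w
    by (cases w rule: rev_cases) auto
  then have "{w \<in> lists A. w \<noteq> [] \<and> last w = c} = (if c \<in> A then conc (lists A) {[c]} else {})"
    by (auto simp: conc_def)
  then show ?thesis
    by (simp add: gen_star_height_le_conc gen_star_height_le_letter gen_star_height_le_lists
        gen_star_height_le_empty)
qed

fun pair_count :: "'a \<Rightarrow> 'a \<Rightarrow> 'a list \<Rightarrow> nat" where
  "pair_count c d (x # y # w) = of_bool (x = c \<and> y = d) + pair_count c d (y # w)"
| "pair_count c d _ = 0"

lemma pair_count_append:
  "pair_count c d (u @ v) =
     pair_count c d u + pair_count c d v + of_bool (u \<noteq> [] \<and> v \<noteq> [] \<and> last u = c \<and> hd v = d)"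
proof (induction u rule: induct_list012)
  case (2 x)
  then show ?case by (cases v) auto
qed auto

lemma pair_count_snoc:
  "w \<noteq> [] \<Longrightarrow> pair_count c d (w @ [y]) = pair_count c d w + of_bool (last w = c \<and> y = d)"
  by (simp add: pair_count_append)

lemma pair_count_first_split:
  assumes "0 < pair_count c d w"
  obtains u v where "w = u @ v" "u \<noteq> []" "v \<noteq> []" "last u = c" "hd v = d" "pair_count c d u = 0"
  using assms
proof (induction w arbitrary: thesis rule: rev_induct)
  case (snoc y w)
  show ?case
  proof (cases "0 < pair_count c d w")
    case True
    obtain u v where "w = u @ v" "u \<noteq> []" "v \<noteq> []" "last u = c" "hd v = d" "pair_count c d u = 0"
      by (rule snoc.IH[OF _ True])
    then show ?thesis using snoc.prems(1)[of u "v @ [y]"] by simp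
  next
    case False
    with snoc.prems(2) have "w \<noteq> []" "last w = c" "y = d"
      by (auto simp: pair_count_append split: if_splits)
    with False show ?thesis by (intro snoc.prems(1)[of w "[y]"]) auto
  qed
qed simp

lemma pair_count_pos_iff: "0 < pair_count c d w \<longleftrightarrow> (\<exists>x y. w = x @ c # d # y)"
proof
  assume "0 < pair_count c d w"
  then obtain u v where uv: "w = u @ v" "u \<noteq> []" "v \<noteq> []" "last u = c" "hd v = d"
    and "pair_count c d u = 0"
    by (rule pair_count_first_split)
  obtain u' where "u = u' @ [c]" using uv(2,4) by (metis append_butlast_last_id)
  moreover obtain v' where "v = d # v'" using uv(3,5) by (metis list.collapse)
  ultimately show "\<exists>x y. w = x @ c # d # y" using uv(1) by simp blast
next
  assume "\<exists>x y. w = x @ c # d # y"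
  then obtain x y where "w = x @ c # d # y" by blast
  then show "0 < pair_count c d w" using pair_count_append[of c d x "c # d # y"] by simp
qed

lemma conc_lists_pair:
  assumes "c \<in> A" "d \<in> A"
  shows "conc (lists A) (conc {[c, d]} (lists A)) = {w \<in> lists A. \<exists>x y. w = x @ c # d # y}"
  using assms unfolding conc_def by auto blast

lemma gen_star_height_le_pair_count_0:
  assumes "c \<in> A" "d \<in> A"
  shows "gen_star_height_le A {w \<in> lists A. pair_count c d w = 0} h"
proof -
  have "{w \<in> lists A. pair_count c d w = 0} = lists A - conc (lists A) (conc {[c, d]} (lists A))"
    by (auto simp: conc_lists_pair[OF assms] pair_count_pos_iff[symmetric])
  moreover have "{[c, d]} = conc {[c]} {[d]}" by (simp add: conc_def)
  ultimately show ?thesis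
    using assms
    by (simp add: gen_star_height_le_Diff_lists gen_star_height_le_conc gen_star_height_le_lists
        gen_star_height_le_letter)
qed

lemma gen_star_height_le_pair_count_pos_iff:
  assumes "c \<in> A" "d \<in> A"
  shows "gen_star_height_le A {w \<in> lists A. 0 < pair_count c d w \<longleftrightarrow> b} h"
proof (cases b)
  case True
  then have "{w \<in> lists A. 0 < pair_count c d w \<longleftrightarrow> b} = lists A - {w \<in> lists A. pair_count c d w = 0}"
    by auto
  then show ?thesis
    using assms by (simp add: gen_star_height_le_Diff_lists gen_star_height_le_pair_count_0)
next
  case False
  then show ?thesis
    using gen_star_height_le_pair_count_0[OF assms] by simp
qed

section \<open>Counting a two-letter factor modulo \<open>N\<close>\<close>

definition pair_blocks :: "'a set \<Rightarrow> 'a set \<Rightarrow> 'a \<Rightarrow> 'a \<Rightarrow> 'a list set" where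
  "pair_blocks A D c d = {u \<in> lists A. u \<noteq> [] \<and> hd u \<in> D \<and> last u = c \<and> pair_count c d u = 0}"

definition pair_count_words :: "'a set \<Rightarrow> 'a set \<Rightarrow> 'a \<Rightarrow> 'a \<Rightarrow> nat \<Rightarrow> 'a list set" where
  "pair_count_words A D c d k = {w \<in> lists A. w \<noteq> [] \<and> hd w \<in> D \<and> pair_count c d w = k}"

definition pair_count_mod_words :: "'a set \<Rightarrow> 'a set \<Rightarrow> 'a \<Rightarrow> 'a \<Rightarrow> nat \<Rightarrow> nat \<Rightarrow> 'a list set" where
  "pair_count_mod_words A D c d N r =
     {w \<in> lists A. w \<noteq> [] \<and> hd w \<in> D \<and> pair_count c d w mod N = r}"

text \<open>A word with \<open>k + 1\<close> occurrences of \<open>cd\<close> is cut between the \<open>c\<close> and the \<open>d\<close> of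
  the first one; all later pieces start with \<open>d\<close>, hence the constraint \<open>D\<close> on first letters.\<close>

lemma pair_count_words_Suc:
  "pair_count_words A D c d (Suc k) = conc (pair_blocks A D c d) (pair_count_words A {d} c d k)"
proof (intro equalityI subsetI)
  fix w
  assume "w \<in> pair_count_words A D c d (Suc k)"
  then have w: "w \<in> lists A" "w \<noteq> []" "hd w \<in> D" "pair_count c d w = Suc k"
    by (auto simp: pair_count_words_def)
  then obtain u v where uv: "w = u @ v" "u \<noteq> []" "v \<noteq> []" "last u = c" "hd v = d"
    "pair_count c d u = 0"
    by (metis zero_less_Suc pair_count_first_split)
  have "pair_count c d v = k"
    using w(4) uv pair_count_append[of c d u v] by simp
  with w uv show "w \<in> conc (pair_blocks A D c d) (pair_count_words A {d} c d k)"
    unfolding conc_def pair_blocks_def pair_count_words_def by auto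
next
  fix w
  assume "w \<in> conc (pair_blocks A D c d) (pair_count_words A {d} c d k)"
  then obtain u v where "w = u @ v" "u \<in> pair_blocks A D c d" "v \<in> pair_count_words A {d} c d k"
    unfolding conc_def by blast
  then show "w \<in> pair_count_words A D c d (Suc k)"
    using pair_count_append[of c d u v]
    by (auto simp: pair_blocks_def pair_count_words_def)
qed

lemma pair_count_words_hd_eq:
  "pair_count_words A {d} c d k =
     conc (conc_pow (pair_blocks A {d} c d) k) (pair_count_words A {d} c d 0)"
  by (induction k) (simp_all add: pair_count_words_Suc conc_pow_Suc conc_assoc)

lemma pair_count_mod_words_eq_UN:
  "pair_count_mod_words A D c d N r = (\<Union>k\<in>{k. k mod N = r}. pair_count_words A D c d k)"
  by (auto simp: pair_count_mod_words_def pair_count_words_def)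

lemma pair_count_mod_words_hd_eq:
  assumes "r < N"
  shows "pair_count_mod_words A {d} c d N r =
    conc (kstar (conc_pow (pair_blocks A {d} c d) N))
      (conc (conc_pow (pair_blocks A {d} c d) r) (pair_count_words A {d} c d 0))"
proof -
  let ?B = "pair_blocks A {d} c d" and ?Z = "pair_count_words A {d} c d 0"
  have "{k. k mod N = r} = range (\<lambda>j. N * j + r)"
  proof (intro equalityI subsetI)
    fix k
    assume "k \<in> {k. k mod N = r}"
    then have "k = N * (k div N) + r"
      using mult_div_mod_eq[of N k] by simp
    then show "k \<in> range (\<lambda>j. N * j + r)"
      by (rule range_eqI)
  qed (use assms in auto)
  then have "pair_count_mod_words A {d} c d N r = (\<Union>j. pair_count_words A {d} c d (N * j + r))"
    by (simp add: pair_count_mod_words_eq_UN)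
  also have "\<dots> = (\<Union>j. conc (conc_pow ?B (N * j + r)) ?Z)"
    by (intro SUP_cong refl pair_count_words_hd_eq)
  also have "\<dots> = (\<Union>j. conc (conc_pow (conc_pow ?B N) j) (conc (conc_pow ?B r) ?Z))"
    by (simp add: conc_pow_mult conc_pow_add conc_assoc)
  also have "\<dots> = conc (kstar (conc_pow ?B N)) (conc (conc_pow ?B r) ?Z)"
    by (simp add: kstar_eq_UN_conc_pow conc_UN_left)
  finally show ?thesis .
qed

lemma Suc_mod_eq_iff:
  fixes N :: nat
  assumes "r < N"
  shows "Suc k mod N = r \<longleftrightarrow> k mod N = (r + N - 1) mod N"
proof
  assume "Suc k mod N = r"
  then have "(r + N - 1) mod N = (Suc k mod N + (N - 1)) mod N"
    using assms by simp
  also have "\<dots> = (Suc k + (N - 1)) mod N"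
    by (simp add: mod_add_left_eq)
  also have "Suc k + (N - 1) = k + N"
    using assms by simp
  finally show "k mod N = (r + N - 1) mod N" by simp
next
  assume "k mod N = (r + N - 1) mod N"
  have "Suc k mod N = Suc (k mod N) mod N"
    by (simp add: mod_Suc_eq)
  also have "\<dots> = Suc ((r + N - 1) mod N) mod N"
    using \<open>k mod N = (r + N - 1) mod N\<close> by simp
  also have "\<dots> = Suc (r + N - 1) mod N"
    by (simp add: mod_Suc_eq)
  also have "Suc (r + N - 1) = r + N"
    using assms by simp
  finally show "Suc k mod N = r"
    using assms by simp
qed

lemma pair_count_mod_words_eq:
  assumes "r < N"
  shows "pair_count_mod_words A D c d N r =
    (if r = 0 then pair_count_words A D c d 0 else {}) \<union>
    conc (pair_blocks A D c d) (pair_count_mod_words A {d} c d N ((r + N - 1) mod N))"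
proof -
  have "pair_count_mod_words A D c d N r =
      (if r = 0 then pair_count_words A D c d 0 else {}) \<union>
      (\<Union>k\<in>{k. Suc k mod N = r}. pair_count_words A D c d (Suc k))"
  proof (rule Set.set_eqI)
    fix w
    show "w \<in> pair_count_mod_words A D c d N r \<longleftrightarrow>
      w \<in> (if r = 0 then pair_count_words A D c d 0 else {}) \<union>
        (\<Union>k\<in>{k. Suc k mod N = r}. pair_count_words A D c d (Suc k))"
      using assms
      by (cases "pair_count c d w") (auto simp: pair_count_mod_words_def pair_count_words_def)
  qed
  also have "(\<Union>k\<in>{k. Suc k mod N = r}. pair_count_words A D c d (Suc k)) =
      conc (pair_blocks A D c d) (pair_count_mod_words A {d} c d N ((r + N - 1) mod N))"
    by (simp add: Suc_mod_eq_iff[OF assms] pair_count_words_Suc pair_count_mod_words_eq_UN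
        conc_UN_right)
  finally show ?thesis .
qed

lemma gen_star_height_le_pair_count_words_0:
  assumes "finite A" "c \<in> A" "d \<in> A"
  shows "gen_star_height_le A (pair_count_words A D c d 0) h"
proof -
  have "pair_count_words A D c d 0 =
      {w \<in> lists A. w \<noteq> [] \<and> hd w \<in> D} \<inter> {w \<in> lists A. pair_count c d w = 0}"
    by (auto simp: pair_count_words_def)
  then show ?thesis
    using assms
    by (simp add: gen_star_height_le_Int gen_star_height_le_hd_in gen_star_height_le_pair_count_0)
qed

lemma gen_star_height_le_pair_blocks:
  assumes "finite A" "c \<in> A" "d \<in> A"
  shows "gen_star_height_le A (pair_blocks A D c d) h"
proof -
  have "pair_blocks A D c d = pair_count_words A D c d 0 \<inter> {w \<in> lists A. w \<noteq> [] \<and> last w = c}"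
    by (auto simp: pair_blocks_def pair_count_words_def)
  then show ?thesis
    using assms
    by (simp add: gen_star_height_le_Int gen_star_height_le_pair_count_words_0
        gen_star_height_le_last_eq)
qed

lemma gen_star_height_le_pair_count_mod_words:
  assumes "finite A" "c \<in> A" "d \<in> A" "r < N"
  shows "gen_star_height_le A (pair_count_mod_words A D c d N r) 1"
proof -
  have "gen_star_height_le A (pair_count_mod_words A {d} c d N s) 1" if "s < N" for s
  proof -
    have "gen_star_height_le A (kstar (conc_pow (pair_blocks A {d} c d) N)) (0 + 1)"
      using assms
      by (intro gen_star_height_le_kstar gen_star_height_le_conc_pow gen_star_height_le_pair_blocks)
    then show ?thesis
      unfolding pair_count_mod_words_hd_eq[OF that]
      using assms
      by (auto intro!: gen_star_height_le_conc gen_star_height_le_conc_pow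
          gen_star_height_le_pair_blocks gen_star_height_le_pair_count_words_0)
  qed
  moreover have "(r + N - 1) mod N < N"
    using assms(4) by simp
  ultimately show ?thesis
    unfolding pair_count_mod_words_eq[OF assms(4)]
    using assms
    by (auto intro!: gen_star_height_le_Un gen_star_height_le_conc gen_star_height_le_pair_blocks
        gen_star_height_le_pair_count_words_0 gen_star_height_le_empty)
qed

section \<open>Signatures\<close>

definition signature :: "nat \<Rightarrow> 'a set \<Rightarrow> 'a list \<Rightarrow> 'a \<times> 'a \<times> ('a \<times> 'a \<Rightarrow> nat) \<times> ('a \<times> 'a) set"
  where "signature N A w =
    (hd w, last w, restrict (\<lambda>(c, d). pair_count c d w mod N) (A \<times> A),
     {(c, d) \<in> A \<times> A. 0 < pair_count c d w})"

lemma signature_eq_iff: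
  "signature N A u = signature N A v \<longleftrightarrow>
     hd u = hd v \<and> last u = last v \<and>
     (\<forall>c\<in>A. \<forall>d\<in>A. pair_count c d u mod N = pair_count c d v mod N \<and>
        (0 < pair_count c d u \<longleftrightarrow> 0 < pair_count c d v))"
  unfolding signature_def by (auto simp: fun_eq_iff restrict_def set_eq_iff split: if_splits)

lemma finite_signature_image:
  assumes "finite A" "0 < N"
  shows "finite (signature N A ` {w \<in> lists A. w \<noteq> []})"
proof (rule finite_subset)
  show "signature N A ` {w \<in> lists A. w \<noteq> []} \<subseteq>
      A \<times> A \<times> (A \<times> A \<rightarrow>\<^sub>E {..<N}) \<times> Pow (A \<times> A)"
  proof (rule image_subsetI)
    fix w
    assume w: "w \<in> {w \<in> lists A. w \<noteq> []}"
    have "restrict (\<lambda>(c, d). pair_count c d w mod N) (A \<times> A) \<in> A \<times> A \<rightarrow>\<^sub>E {..<N}"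
      using assms(2) by (simp add: restrict_PiE_iff split_beta)
    then show "signature N A w \<in> A \<times> A \<times> (A \<times> A \<rightarrow>\<^sub>E {..<N}) \<times> Pow (A \<times> A)"
      using w by (auto simp: signature_def)
  qed
  show "finite (A \<times> A \<times> (A \<times> A \<rightarrow>\<^sub>E {..<N}) \<times> Pow (A \<times> A))"
    using assms(1) by (simp add: finite_PiE)
qed

lemma gen_star_height_le_signature_class:
  assumes "finite A" "0 < N"
  shows "gen_star_height_le A {w \<in> lists A. w \<noteq> [] \<and> signature N A w = signature N A w0} 1"
proof -
  define F where "F c d = pair_count_mod_words A UNIV c d N (pair_count c d w0 mod N)
    \<inter> {w \<in> lists A. 0 < pair_count c d w \<longleftrightarrow> 0 < pair_count c d w0}" for c d
  have class_eq: "{w \<in> lists A. w \<noteq> [] \<and> signature N A w = signature N A w0} =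
      {w \<in> lists A. w \<noteq> [] \<and> hd w \<in> {hd w0}} \<inter> {w \<in> lists A. w \<noteq> [] \<and> last w = last w0} \<inter>
      (lists A \<inter> (\<Inter>(c, d)\<in>A \<times> A. F c d))"
    unfolding signature_eq_iff F_def pair_count_mod_words_def by auto
  have "gen_star_height_le A (F c d) 1" if "c \<in> A" "d \<in> A" for c d
    unfolding F_def
    using assms that
    by (intro gen_star_height_le_Int gen_star_height_le_pair_count_mod_words
        gen_star_height_le_pair_count_pos_iff) auto
  then have "gen_star_height_le A (lists A \<inter> (\<Inter>(c, d)\<in>A \<times> A. F c d)) 1"
    using assms(1) by (intro gen_star_height_le_INT_lists) auto
  then show ?thesis
    unfolding class_eq
    by (intro gen_star_height_le_Int[OF gen_star_height_le_Int] gen_star_height_le_hd_in[OF assms(1)]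
        gen_star_height_le_last_eq)
qed

section \<open>Words in a Rees zero-matrix semigroup over an abelian group\<close>

lemma (in group) nat_pow_mod_order:
  assumes "x \<in> carrier G"
  shows "x [^] (k mod order G) = x [^] k"
proof -
  have "x [^] k = x [^] (order G * (k div order G) + k mod order G)"
    by (simp add: mult_div_mod_eq)
  also have "\<dots> = (x [^] order G) [^] (k div order G) \<otimes> x [^] (k mod order G)"
    using assms by (simp add: nat_pow_mult nat_pow_pow)
  also have "\<dots> = x [^] (k mod order G)"
    using assms by (simp add: pow_order_eq_1)
  finally show ?thesis by simp
qed

lemma (in comm_monoid) finprod_pow_Suc_at:
  fixes e :: "_ \<Rightarrow> nat"
  assumes "finite S" "s \<in> S" "q \<in> S \<rightarrow> carrier G"
  shows "(\<Otimes>t\<in>S. q t [^] (e t + of_bool (t = s))) = (\<Otimes>t\<in>S. q t [^] e t) \<otimes> q s"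
proof -
  have q: "q t \<in> carrier G" if "t \<in> S" for t
    using assms(3) that by blast
  have "(\<Otimes>t\<in>S. q t [^] (e t + of_bool (t = s))) =
      (\<Otimes>t\<in>S. q t [^] e t \<otimes> (if s = t then q t else \<one>))"
    using assms(3) by (intro finprod_cong') (auto simp: q nat_pow_Suc)
  also have "\<dots> = (\<Otimes>t\<in>S. q t [^] e t) \<otimes> (\<Otimes>t\<in>S. if s = t then q t else \<one>)"
    using assms(3) by (intro finprod_multf) auto
  also have "(\<Otimes>t\<in>S. if s = t then q t else \<one>) = q s"
    using assms by (intro finprod_singleton) auto
  finally show ?thesis .
qed

locale rees0_word_morphism = comm_group G
  for G :: "('g, 'b) monoid_scheme" (structure) +
  fixes I :: "'i set" and Lam :: "'l set" and P :: "'l \<Rightarrow> 'i \<Rightarrow> 'g option"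
    and A :: "'a set" and psi :: "'a list \<Rightarrow> ('i \<times> 'g \<times> 'l) option"
  assumes finite_alphabet: "finite A"
    and entry_in_carrier: "\<And>l i g. l \<in> Lam \<Longrightarrow> i \<in> I \<Longrightarrow> P l i = Some g \<Longrightarrow> g \<in> carrier G"
    and psi_in_carrier: "\<And>w. w \<in> lists A \<Longrightarrow> w \<noteq> [] \<Longrightarrow> psi w \<in> rees0_carrier G I Lam"
    and psi_append: "\<And>u v. u \<in> lists A \<Longrightarrow> u \<noteq> [] \<Longrightarrow> v \<in> lists A \<Longrightarrow> v \<noteq> [] \<Longrightarrow>
      psi (u @ v) = rees0_mult G P (psi u) (psi v)"
begin

text \<open>Coordinates of the image of a letter; junk when that image is the zero.\<close>

definition row :: "'a \<Rightarrow> 'i" where "row a = fst (the (psi [a]))"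
definition elem :: "'a \<Rightarrow> 'g" where "elem a = fst (snd (the (psi [a])))"
definition col :: "'a \<Rightarrow> 'l" where "col a = snd (snd (the (psi [a])))"

lemma psi_letter:
  assumes "a \<in> A"
  shows "psi [a] = None \<or>
    psi [a] = Some (row a, elem a, col a) \<and> row a \<in> I \<and> elem a \<in> carrier G \<and> col a \<in> Lam"
  using psi_in_carrier[of "[a]"] assms by (auto simp: rees0_carrier_def row_def elem_def col_def)

text \<open>The factor \<open>p\<^bsub>col a, row b\<^esub> g\<^sub>b\<close> contributed to the group component of
  \<open>\<psi>(w)\<close> by each occurrence of \<open>ab\<close> in \<open>w\<close>.\<close>

definition weight :: "'a \<times> 'a \<Rightarrow> 'g" where
  "weight p = (if psi [fst p] \<noteq> None \<and> psi [snd p] \<noteq> None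
     then (case P (col (fst p)) (row (snd p)) of Some g \<Rightarrow> g \<otimes> elem (snd p) | None \<Rightarrow> \<one>)
     else \<one>)"

lemma weight_in_carrier: "weight \<in> A \<times> A \<rightarrow> carrier G"
proof
  fix p
  assume p: "p \<in> A \<times> A"
  show "weight p \<in> carrier G"
  proof (cases "psi [fst p] \<noteq> None \<and> psi [snd p] \<noteq> None")
    case True
    with p psi_letter[of "fst p"] psi_letter[of "snd p"]
    have "col (fst p) \<in> Lam" "row (snd p) \<in> I" "elem (snd p) \<in> carrier G"
      by auto
    moreover have "weight p =
        (case P (col (fst p)) (row (snd p)) of Some g \<Rightarrow> g \<otimes> elem (snd p) | None \<Rightarrow> \<one>)"
      using True by (simp add: weight_def)
    ultimately show ?thesis
      by (auto intro: entry_in_carrier split: option.split)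
  qed (auto simp: weight_def)
qed

definition vanishes :: "'a list \<Rightarrow> bool" where
  "vanishes w \<longleftrightarrow> psi [hd w] = None \<or>
     (\<exists>(a, b)\<in>A \<times> A. 0 < pair_count a b w \<and> (psi [b] = None \<or> P (col a) (row b) = None))"

definition word_value :: "'a list \<Rightarrow> ('i \<times> 'g \<times> 'l) option" where
  "word_value w = (if vanishes w then None
     else Some (row (hd w), elem (hd w) \<otimes> (\<Otimes>p\<in>A \<times> A. weight p [^] pair_count (fst p) (snd p) w),
       col (last w)))"

lemma vanishes_snoc:
  assumes "w \<in> lists A" "w \<noteq> []" "y \<in> A"
  shows "vanishes (w @ [y]) \<longleftrightarrow> vanishes w \<or> psi [y] = None \<or> P (col (last w)) (row y) = None"
proof -
  have "0 < pair_count a b (w @ [y]) \<longleftrightarrow> 0 < pair_count a b w \<or> (a, b) = (last w, y)" for a b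
    using assms(2) by (auto simp: pair_count_snoc)
  moreover have "(last w, y) \<in> A \<times> A"
    using assms by auto
  ultimately show ?thesis
    using assms(2) unfolding vanishes_def by auto
qed

lemma psi_last_if_not_vanishes:
  assumes "w \<in> lists A" "w \<noteq> []" "\<not> vanishes w"
  shows "psi [last w] \<noteq> None"
proof (cases w rule: rev_cases)
  case (snoc u x)
  show ?thesis
  proof (cases "u = []")
    case True
    with snoc assms(3) show ?thesis by (simp add: vanishes_def)
  next
    case False
    then have "0 < pair_count (last u) x w" and "last u \<in> A" "x \<in> A"
      using snoc assms(1) by (auto simp: pair_count_snoc)
    moreover have "\<forall>a\<in>A. \<forall>b\<in>A. 0 < pair_count a b w \<longrightarrow> psi [b] \<noteq> None"
      using assms(3) unfolding vanishes_def by blast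
    ultimately show ?thesis
      using snoc by simp
  qed
qed (use assms in simp)

lemma finprod_weight_snoc:
  assumes "w \<in> lists A" "w \<noteq> []" "y \<in> A"
  shows "(\<Otimes>p\<in>A \<times> A. weight p [^] pair_count (fst p) (snd p) (w @ [y])) =
    (\<Otimes>p\<in>A \<times> A. weight p [^] pair_count (fst p) (snd p) w) \<otimes> weight (last w, y)"
proof -
  have "(last w, y) \<in> A \<times> A"
    using assms by auto
  moreover have "pair_count (fst p) (snd p) (w @ [y]) =
      pair_count (fst p) (snd p) w + of_bool (p = (last w, y))" for p
    using assms(2) by (cases p) (auto simp: pair_count_snoc)
  ultimately show ?thesis
    using finprod_pow_Suc_at[OF finite_cartesian_product[OF finite_alphabet finite_alphabet] _
        weight_in_carrier, of "(last w, y)" "\<lambda>p. pair_count (fst p) (snd p) w"]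
    by simp
qed

lemma word_value_singleton: "y \<in> A \<Longrightarrow> word_value [y] = psi [y]"
  using psi_letter[of y] by (auto simp: word_value_def vanishes_def)

lemma word_value_snoc:
  assumes "w \<in> lists A" "w \<noteq> []" "y \<in> A"
  shows "word_value (w @ [y]) = rees0_mult G P (word_value w) (psi [y])"
proof (cases "vanishes w \<or> psi [y] = None \<or> P (col (last w)) (row y) = None")
  case True
  with assms psi_letter[OF assms(3)] show ?thesis
    by (auto simp: vanishes_snoc word_value_def rees0_mult_def)
next
  case False
  then obtain g where y: "psi [y] = Some (row y, elem y, col y)" "elem y \<in> carrier G"
    and g: "P (col (last w)) (row y) = Some g" and nv: "\<not> vanishes w"
    using psi_letter[OF assms(3)] by auto
  have "psi [last w] \<noteq> None"
    using assms(1,2) nv by (rule psi_last_if_not_vanishes)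
  then have "col (last w) \<in> Lam" "psi [last w] = Some (row (last w), elem (last w), col (last w))"
    using psi_letter[of "last w"] assms(1,2) by auto
  moreover have "row y \<in> I" "row (hd w) \<in> I" "elem (hd w) \<in> carrier G"
    using psi_letter[OF assms(3)] psi_letter[of "hd w"] y nv assms(1,2) by (auto simp: vanishes_def)
  ultimately have "g \<in> carrier G" "weight (last w, y) = g \<otimes> elem y"
    using g y entry_in_carrier by (auto simp: weight_def)
  moreover have "(\<Otimes>p\<in>A \<times> A. weight p [^] pair_count (fst p) (snd p) w) \<in> carrier G"
    using weight_in_carrier by (intro finprod_closed) auto
  ultimately show ?thesis
    using assms False y g \<open>elem (hd w) \<in> carrier G\<close>
    by (simp add: word_value_def vanishes_snoc finprod_weight_snoc rees0_mult_def m_assoc)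
qed

lemma psi_eq_word_value: "w \<in> lists A \<Longrightarrow> w \<noteq> [] \<Longrightarrow> psi w = word_value w"
proof (induction w rule: rev_induct)
  case (snoc y w)
  show ?case
  proof (cases "w = []")
    case True
    with snoc.prems show ?thesis by (simp add: word_value_singleton)
  next
    case False
    with snoc show ?thesis by (simp add: psi_append word_value_snoc)
  qed
qed simp

lemma word_value_eq_if_signature_eq:
  assumes "signature (order G) A u = signature (order G) A v"
  shows "word_value u = word_value v"
proof -
  have sig: "hd u = hd v" "last u = last v"
    "\<And>a b. a \<in> A \<Longrightarrow> b \<in> A \<Longrightarrow> pair_count a b u mod order G = pair_count a b v mod order G"
    "\<And>a b. a \<in> A \<Longrightarrow> b \<in> A \<Longrightarrow> 0 < pair_count a b u \<longleftrightarrow> 0 < pair_count a b v"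
    using assms by (auto simp: signature_eq_iff)
  have "vanishes u = vanishes v"
    by (auto simp: vanishes_def sig)
  moreover have "weight p [^] pair_count (fst p) (snd p) u = weight p [^] pair_count (fst p) (snd p) v"
    if p: "p \<in> A \<times> A" for p
  proof -
    have "weight p \<in> carrier G"
      using p weight_in_carrier by blast
    then have "weight p [^] pair_count (fst p) (snd p) u =
        weight p [^] (pair_count (fst p) (snd p) u mod order G)"
      by (simp add: nat_pow_mod_order)
    also have "\<dots> = weight p [^] (pair_count (fst p) (snd p) v mod order G)"
      using p sig(3)[of "fst p" "snd p"] by auto
    also have "\<dots> = weight p [^] pair_count (fst p) (snd p) v"
      using \<open>weight p \<in> carrier G\<close> by (simp add: nat_pow_mod_order)
    finally show ?thesis .
  qed
  then have "(\<Otimes>p\<in>A \<times> A. weight p [^] pair_count (fst p) (snd p) u) =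
      (\<Otimes>p\<in>A \<times> A. weight p [^] pair_count (fst p) (snd p) v)"
    using weight_in_carrier by (intro finprod_cong') auto
  ultimately show ?thesis
    using sig by (simp add: word_value_def)
qed

lemma psi_eq_if_signature_eq:
  assumes "u \<in> lists A" "u \<noteq> []" "v \<in> lists A" "v \<noteq> []"
    and "signature (order G) A u = signature (order G) A v"
  shows "psi u = psi v"
  using assms(5) psi_eq_word_value[OF assms(1,2)] psi_eq_word_value[OF assms(3,4)]
  by (simp add: word_value_eq_if_signature_eq[OF assms(5)])

end

lemma rees0_recognisable_gen_star_height_le_1:
  fixes G :: "('g, 'b) monoid_scheme" and P :: "'l \<Rightarrow> 'i \<Rightarrow> 'g option"
  assumes "comm_group G" "finite (carrier G)" "finite A"
    and "\<forall>l\<in>Lam. \<forall>i\<in>I. \<forall>g. P l i = Some g \<longrightarrow> g \<in> carrier G"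
    and "recognises (rees0_carrier G I Lam) (rees0_mult G P) A L"
  shows "gen_star_height_le A L 1"
proof -
  obtain psi X
    where in_carrier: "\<forall>w. w \<in> lists A \<and> w \<noteq> [] \<longrightarrow> psi w \<in> rees0_carrier G I Lam"
      and append: "\<forall>u v. u \<in> lists A \<and> u \<noteq> [] \<and> v \<in> lists A \<and> v \<noteq> [] \<longrightarrow>
        psi (u @ v) = rees0_mult G P (psi u) (psi v)"
      and L: "L = {w \<in> lists A. w \<noteq> [] \<and> psi w \<in> X}"
    using assms(5) unfolding recognises_def by blast
  interpret rees0_word_morphism G I Lam P A psi
    by (intro rees0_word_morphism.intro rees0_word_morphism_axioms.intro assms(1,3))
      (use assms(4) in_carrier append in auto)
  have "0 < order G"
    using assms(2) by (simp add: order_gt_0_iff_finite)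
  show ?thesis
  proof (rule gen_star_height_le_saturated)
    show "finite (signature (order G) A ` {w \<in> lists A. w \<noteq> []})"
      using assms(3) \<open>0 < order G\<close> by (rule finite_signature_image)
    show "gen_star_height_le A
        {v \<in> lists A. v \<noteq> [] \<and> signature (order G) A v = signature (order G) A w} 1" for w
      using assms(3) \<open>0 < order G\<close> by (rule gen_star_height_le_signature_class)
    show "L \<subseteq> {w \<in> lists A. w \<noteq> []}"
      using L by blast
    show "v \<in> L"
      if "u \<in> L" "v \<in> lists A" "v \<noteq> []" "signature (order G) A v = signature (order G) A u" for u v
      using that psi_eq_if_signature_eq[of v u] L by auto
  qed
qed

lemma recognises_rees_imp_rees0:
  assumes "recognises (rees_carrier G I Lam) (rees_mult G P) A L"
  shows "recognises (rees0_carrier G I Lam) (rees0_mult G (\<lambda>l i. Some (P l i))) A L"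
proof -
  obtain psi X
    where "\<forall>w. w \<in> lists A \<and> w \<noteq> [] \<longrightarrow> psi w \<in> rees_carrier G I Lam"
      and "\<forall>u v. u \<in> lists A \<and> u \<noteq> [] \<and> v \<in> lists A \<and> v \<noteq> [] \<longrightarrow>
        psi (u @ v) = rees_mult G P (psi u) (psi v)"
      and "X \<subseteq> rees_carrier G I Lam" "L = {w \<in> lists A. w \<noteq> [] \<and> psi w \<in> X}"
    using assms unfolding recognises_def by blast
  moreover have "rees0_mult G (\<lambda>l i. Some (P l i)) (Some x) (Some y) = Some (rees_mult G P x y)" for x y
    by (cases x; cases y) (simp add: rees0_mult_def rees_mult_def)
  ultimately show ?thesis
    unfolding recognises_def
    by (intro exI[of _ "\<lambda>w. Some (psi w)"] exI[of _ "Some ` X"])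
      (auto simp: rees0_carrier_def rees_carrier_def)
qed

theorem theorem3p6:
  fixes G :: "('g, 'b) monoid_scheme"
    and I :: "'i set" and Lam :: "'l set"
    and A :: "'a set" and L :: "'a list set"
  assumes "comm_group G" and "finite (carrier G)"
    and "I \<noteq> {}" and "Lam \<noteq> {}"
    and "finite A"
  shows "(\<forall>P :: 'l \<Rightarrow> 'i \<Rightarrow> 'g option.
            (\<forall>l\<in>Lam. \<forall>i\<in>I. \<forall>g. P l i = Some g \<longrightarrow> g \<in> carrier G) \<longrightarrow>
            recognises (rees0_carrier G I Lam) (rees0_mult G P) A L \<longrightarrow>
            gen_star_height_le A L 1)
       \<and> (\<forall>P :: 'l \<Rightarrow> 'i \<Rightarrow> 'g.
            (\<forall>l\<in>Lam. \<forall>i\<in>I. P l i \<in> carrier G) \<longrightarrow>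
            recognises (rees_carrier G I Lam) (rees_mult G P) A L \<longrightarrow>
            gen_star_height_le A L 1)"
proof (intro conjI allI impI)
  fix P :: "'l \<Rightarrow> 'i \<Rightarrow> 'g option"
  assume "\<forall>l\<in>Lam. \<forall>i\<in>I. \<forall>g. P l i = Some g \<longrightarrow> g \<in> carrier G"
    and "recognises (rees0_carrier G I Lam) (rees0_mult G P) A L"
  then show "gen_star_height_le A L 1"
    by (rule rees0_recognisable_gen_star_height_le_1[OF assms(1,2,5)])
next
  fix P :: "'l \<Rightarrow> 'i \<Rightarrow> 'g"
  assume "\<forall>l\<in>Lam. \<forall>i\<in>I. P l i \<in> carrier G"
    and "recognises (rees_carrier G I Lam) (rees_mult G P) A L"
  then show "gen_star_height_le A L 1"
    by (intro rees0_recognisable_gen_star_height_le_1[OF assms(1,2,5), where P = "\<lambda>l i. Some (P l i)"])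
      (auto intro: recognises_rees_imp_rees0)
qed

end
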